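(* Let $n\ge 1$ and let $F$ be a finite simple graph that contains $\widehat{G}_n$ as an induced subgraph, such that the only edge of $F$ joining a vertex of $V(G_n)$ to a vertex of $V(F)\setminus V(G_n)$ is the edge $r_n y_n$. Then for every zero forcing set $P$ of $F$: (i) $|V(G_n)\cap P|\ge t_n$; (ii) if $|V(G_n)\cap P| = t_n$, then $r_n\notin P$, and in the zero forcing process of $F$ started from $P$ (for any valid order of forcing steps) the vertex $r_n$ is never forced by a vertex of $V(G_n)$.
   Context: Zero forcing: given a graph and a set $S$ of vertices initially colored black (all others white), repeatedly apply the rule: if a black vertex $v$ has exactly one white neighbor $u$, then $u$ becomes black (we say $v$ forces $u$). $S$ is a zero forcing set if eventually every vertex becomes black. $Z(G)$ is the minimum size of a zero forcing set of $G$. Subdivided $K_4$: the complete graph on 4 vertices $a,b,c,e$ with the edge $ab$ subdivided by a new vertex $s$ (so 5 vertices, edges $as, sb, ac, ae, bc, be, ce$); $s$ is called its subdivision vertex. $B_d$ ($d\ge1$) is the complete binary tree with $2^d-1$ vertices and root $r$ (for $d=1$ a single vertex; otherwise $r$ has two children that are roots of copies of $B_{d-1}$). $G_n$ ($n\ge1$): take $B_{2n-1}$ with root $r_n$, and for every leaf $\ell$ of $B_{2n-1}$ attach a new copy of the subdivided $K_4$ by identifying $\ell$ with its subdivision vertex. (So $G_1$ is the subdivided $K_4$ with $r_1$ its subdivision vertex.) $\widehat{G}_n$ is obtained from $G_n$ by adding a new vertex $y_n$ adjacent only to $r_n$. The sequence $t_n$ is defined by $t_1=2$ and $t_{n+1}=4t_n+2$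 for $n\ge1$. *)

theory Defs
  imports Main
begin

definition simple_graph :: "'a set \<Rightarrow> ('a \<Rightarrow> 'a \<Rightarrow> bool) \<Rightarrow> bool" where
  "simple_graph V E \<longleftrightarrow> finite V \<and> (\<forall>u v. E u v \<longrightarrow> E v u) \<and> (\<forall>v. \<not> E v v)
     \<and> (\<forall>u v. E u v \<longrightarrow> u \<in> V \<and> v \<in> V)"

definition forces :: "'a set \<Rightarrow> ('a \<Rightarrow> 'a \<Rightarrow> bool) \<Rightarrow> 'a set \<Rightarrow> 'a \<Rightarrow> 'a \<Rightarrow> bool" where
  "forces V E B v u \<longleftrightarrow> v \<in> B \<and> u \<in> V \<and> u \<notin> B \<and> E v u
     \<and> (\<forall>w\<in>V. E v w \<and> w \<noteq> u \<longrightarrow> w \<in> B)"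

fun valid_forcing_seq :: "'a set \<Rightarrow> ('a \<Rightarrow> 'a \<Rightarrow> bool) \<Rightarrow> 'a set \<Rightarrow> ('a \<times> 'a) list \<Rightarrow> bool" where
  "valid_forcing_seq V E B [] = True"
| "valid_forcing_seq V E B ((v, u) # xs) =
     (forces V E B v u \<and> valid_forcing_seq V E (insert u B) xs)"

definition zf_process :: "'a set \<Rightarrow> ('a \<Rightarrow> 'a \<Rightarrow> bool) \<Rightarrow> 'a set \<Rightarrow> ('a \<times> 'a) list \<Rightarrow> bool" where
  "zf_process V E S xs \<longleftrightarrow> valid_forcing_seq V E S xs \<and> S \<union> snd ` set xs = V"

definition zero_forcing_set :: "'a set \<Rightarrow> ('a \<Rightarrow> 'a \<Rightarrow> bool) \<Rightarrow> 'a set \<Rightarrow> bool" where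
  "zero_forcing_set V E S \<longleftrightarrow> S \<subseteq> V \<and> (\<exists>xs. zf_process V E S xs)"

text \<open>Vertices of B_{2n-1}: binary strings p of length at most 2n-2 (the path from the root,
the root being the empty string; leaves have length 2n-2). For each leaf p, the attached
subdivided K4 has subdivision vertex Tr p and further vertices Kv p KA, Kv p KB, Kv p KC, Kv p KE
(the vertices a, b, c, e). Yv is the extra vertex y_n.\<close>

datatype k4v = KA | KB | KC | KE

datatype gv = Tr "bool list" | Kv "bool list" k4v | Yv

definition G_verts :: "nat \<Rightarrow> gv set" where
  "G_verts n = {Tr p | p. length p \<le> 2*n - 2} \<union> {Kv p k | p k. length p = 2*n - 2}"

definition Ghat_verts :: "nat \<Rightarrow> gv set" where
  "Ghat_verts n = insert Yv (G_verts n)"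

definition root :: gv where "root = Tr []"

definition Ghat_edge0 :: "nat \<Rightarrow> gv \<Rightarrow> gv \<Rightarrow> bool" where
  "Ghat_edge0 n u v \<longleftrightarrow>
     (\<exists>p b. length p < 2*n - 2 \<and> u = Tr p \<and> v = Tr (p @ [b]))
   \<or> (\<exists>p. length p = 2*n - 2 \<and> u = Tr p \<and> (v = Kv p KA \<or> v = Kv p KB))
   \<or> (\<exists>p x y. length p = 2*n - 2 \<and> u = Kv p x \<and> v = Kv p y \<and> x \<noteq> y \<and> {x, y} \<noteq> {KA, KB})
   \<or> (u = Yv \<and> v = Tr [])"

definition Ghat_edge :: "nat \<Rightarrow> gv \<Rightarrow> gv \<Rightarrow> bool" where
  "Ghat_edge n u v \<longleftrightarrow> Ghat_edge0 n u v \<or> Ghat_edge0 n v u"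

fun t :: "nat \<Rightarrow> nat" where
  "t 0 = 0"
| "t (Suc 0) = 2"
| "t (Suc (Suc n)) = 4 * t (Suc n) + 2"

end

theory Submission
  imports Defs
begin

text \<open>
  Count the vertices of P in the part of G_n below a vertex of the binary tree.
  In a leaf gadget, the subdivided K_4 with subdivision vertex s, the pairs {a, b} and {c, e}
  are forts, so P contains at least two gadget vertices. If exactly two, then s is white and each
  black gadget vertex has two white gadget neighbours, so the first white gadget vertex to turn
  black is s, forced from outside the gadget, i.e. by its parent.

  Going up two levels: below a child c of p there are two subtrees of the previous level, each
  with at least t_k black vertices, and a tight one (exactly t_k) has its root forced by c. As c
  forces only once, at most one of them is tight, so the subtree of c holds at least 2 t_k + 1
  black vertices and the subtree of p at least 4 t_k + 2 = t_(k+1). In the equality case p is white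
  and each child has already spent its force on a grandchild, so p is forced by its own parent.
\<close>

lemma valid_forcing_seqD:
  "valid_forcing_seq V E B xs \<Longrightarrow> (v, u) \<in> set xs \<Longrightarrow> u \<notin> B \<and> E v u \<and> u \<in> V"
proof (induction xs arbitrary: B)
  case (Cons x xs)
  then show ?case by (cases x) (auto simp: forces_def)
qed simp

lemma saturated_never_forces:
  "valid_forcing_seq V E B xs \<Longrightarrow> v \<in> B \<Longrightarrow> \<forall>w\<in>V. E v w \<longrightarrow> w \<in> B \<Longrightarrow> v \<notin> fst ` set xs"
proof (induction xs arbitrary: B)
  case (Cons x xs)
  obtain v' u' where "x = (v', u')" by fastforce
  then show ?case using Cons.prems Cons.IH[of "insert u' B"] by (auto simp: forces_def)
qed simp

lemma valid_forcing_seq_distinct_targets: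
  "valid_forcing_seq V E B xs \<Longrightarrow> distinct (map snd xs)"
proof (induction xs arbitrary: B)
  case (Cons x xs)
  obtain v u where "x = (v, u)" by fastforce
  then show ?case using Cons valid_forcing_seqD[of V E "insert u B" xs] by force
qed simp

lemma valid_forcing_seq_distinct_forcers:
  "valid_forcing_seq V E B xs \<Longrightarrow> distinct (map fst xs)"
proof (induction xs arbitrary: B)
  case (Cons x xs)
  obtain v u where x: "x = (v, u)" by fastforce
  have "v \<notin> fst ` set xs"
    using Cons.prems x by (intro saturated_never_forces[of V E "insert u B"]) (auto simp: forces_def)
  then show ?case using Cons x by auto
qed simp

lemma valid_forcing_seq_unique_forcer:
  "valid_forcing_seq V E B xs \<Longrightarrow> (v, u) \<in> set xs \<Longrightarrow> (v', u) \<in> set xs \<Longrightarrow> v = v'"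
  by (metis valid_forcing_seq_distinct_targets distinct_map inj_on_eq_iff prod.inject snd_conv)

lemma valid_forcing_seq_unique_target:
  "valid_forcing_seq V E B xs \<Longrightarrow> (v, u) \<in> set xs \<Longrightarrow> (v, u') \<in> set xs \<Longrightarrow> u = u'"
  by (metis valid_forcing_seq_distinct_forcers distinct_map inj_on_eq_iff prod.inject fst_conv)

lemma valid_forcing_seq_first_force_into:
  assumes "valid_forcing_seq V E B xs" and "W \<inter> B = {}" and "\<exists>(v, u)\<in>set xs. u \<in> W"
  shows "\<exists>(v, u)\<in>set xs. u \<in> W \<and> v \<notin> W \<and> E v u \<and> (\<forall>w\<in>W. w \<in> V \<longrightarrow> E v w \<longrightarrow> w = u)"
  using assms
proof (induction xs arbitrary: B)
  case (Cons x xs)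
  obtain v u where x: "x = (v, u)" by fastforce
  show ?case
  proof (cases "u \<in> W")
    case True
    then show ?thesis using Cons.prems x by (auto simp: forces_def)
  next
    case False
    then show ?thesis using Cons.IH[of "insert u B"] Cons.prems x by auto
  qed
qed simp

lemma zf_process_forces_white:
  "zf_process V E P xs \<Longrightarrow> x \<in> V \<Longrightarrow> x \<notin> P \<Longrightarrow> \<exists>v. (v, x) \<in> set xs"
  unfolding zf_process_def by force

lemma zf_process_meets_fort:
  assumes zf: "zf_process V E P xs" and "W \<subseteq> V" and "W \<noteq> {}"
    and fort: "\<And>v u. v \<notin> W \<Longrightarrow> u \<in> W \<Longrightarrow> E v u \<Longrightarrow> \<exists>w\<in>W. w \<noteq> u \<and> E v w"
  shows "W \<inter> P \<noteq> {}"
proof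
  assume white: "W \<inter> P = {}"
  obtain u0 where "u0 \<in> W" using \<open>W \<noteq> {}\<close> by blast
  then obtain v0 where "(v0, u0) \<in> set xs"
    using zf_process_forces_white[OF zf] white \<open>W \<subseteq> V\<close> by blast
  then obtain v u where "u \<in> W" "v \<notin> W" "E v u" "\<forall>w\<in>W. w \<in> V \<longrightarrow> E v w \<longrightarrow> w = u"
    using valid_forcing_seq_first_force_into[of V E P xs W] zf white \<open>u0 \<in> W\<close>
    unfolding zf_process_def by blast
  then show False using fort \<open>W \<subseteq> V\<close> by blast
qed

lemma subdivided_K4_tight:
  assumes zf: "zf_process V E P xs"
    and sym: "\<And>u v. E u v \<longleftrightarrow> E v u"
    and in_V: "{s, a, c} \<subseteq> V"
    and distinct: "distinct [s, a, b, c, e]"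
    and Na: "\<And>w. E a w \<longleftrightarrow> w \<in> {s, c, e}"
    and Nb: "\<And>w. E b w \<longleftrightarrow> w \<in> {s, c, e}"
    and Nc: "\<And>w. E c w \<longleftrightarrow> w \<in> {a, b, e}"
    and Ne: "\<And>w. E e w \<longleftrightarrow> w \<in> {a, b, c}"
    and white: "{s, a, c} \<inter> P = {}"
  shows "\<forall>(v, u) \<in> set xs. u = s \<longrightarrow> v \<notin> {s, a, b, c, e}"
proof -
  have valid: "valid_forcing_seq V E P xs" using zf unfolding zf_process_def by blast
  obtain v0 where "(v0, s) \<in> set xs"
    using zf_process_forces_white[OF zf] in_V white by blast
  then obtain v u where vu: "(v, u) \<in> set xs" "u \<in> {s, a, c}" "v \<notin> {s, a, c}" "E v u"
    and only: "\<forall>w\<in>{s, a, c}. w \<in> V \<longrightarrow> E v w \<longrightarrow> w = u"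
    using valid_forcing_seq_first_force_into[OF valid white] by blast
  \<comment> \<open>b and e each have two neighbours in {s, a, c}, so the force comes from outside the gadget\<close>
  have "v \<noteq> b" using only Nb in_V distinct vu(2) by auto
  moreover have "v \<noteq> e" using only Ne in_V distinct vu(2) by auto
  ultimately have outside: "v \<notin> {s, a, b, c, e}" using vu(3) by blast
  then have "u = s" using vu(2,4) sym Na Nc by auto
  then show ?thesis
    using outside vu(1) valid_forcing_seq_unique_forcer[OF valid] by blast
qed

lemma subdivided_K4_zero_forcing:
  assumes zf: "zf_process V E P xs"
    and sym: "\<And>u v. E u v \<longleftrightarrow> E v u"
    and in_V: "{s, a, b, c, e} \<subseteq> V"
    and distinct: "distinct [s, a, b, c, e]"
    and Na: "\<And>w. E a w \<longleftrightarrow> w \<in> {s, c, e}"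
    and Nb: "\<And>w. E b w \<longleftrightarrow> w \<in> {s, c, e}"
    and Nc: "\<And>w. E c w \<longleftrightarrow> w \<in> {a, b, e}"
    and Ne: "\<And>w. E e w \<longleftrightarrow> w \<in> {a, b, c}"
  shows "2 \<le> card ({s, a, b, c, e} \<inter> P)"
    and "card ({s, a, b, c, e} \<inter> P) = 2 \<Longrightarrow>
           s \<notin> P \<and> (\<forall>(v, u) \<in> set xs. u = s \<longrightarrow> v \<notin> {s, a, b, c, e})"
proof -
  have "{a, b} \<inter> P \<noteq> {}"
    by (rule zf_process_meets_fort[OF zf]) (use in_V distinct sym Na Nb in auto)
  moreover have "{c, e} \<inter> P \<noteq> {}"
    by (rule zf_process_meets_fort[OF zf]) (use in_V distinct sym Nc Ne in auto)
  moreover have count: "card ({s, a, b, c, e} \<inter> P) =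
      of_bool (s \<in> P) + of_bool (a \<in> P) + of_bool (b \<in> P) + of_bool (c \<in> P) + of_bool (e \<in> P)"
    using distinct by (simp add: Int_insert_left card_insert_if)
  ultimately show "2 \<le> card ({s, a, b, c, e} \<inter> P)" by auto
  assume "card ({s, a, b, c, e} \<inter> P) = 2"
  with count \<open>{a, b} \<inter> P \<noteq> {}\<close> \<open>{c, e} \<inter> P \<noteq> {}\<close>
  have "s \<notin> P" and "a \<in> P \<longleftrightarrow> b \<notin> P" and "c \<in> P \<longleftrightarrow> e \<notin> P" by auto
  moreover have "\<forall>(v, u) \<in> set xs. u = s \<longrightarrow> v \<notin> {s, a, b, c, e}"
  proof -
    \<comment> \<open>the four cases differ only by the symmetries a \<leftrightarrow> b and c \<leftrightarrow> e of the gadget\<close>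
    have Nc': "\<And>w. E c w \<longleftrightarrow> w \<in> {b, a, e}" and Ne': "\<And>w. E e w \<longleftrightarrow> w \<in> {b, a, c}"
      using Nc Ne by (simp_all add: insert_commute)
    have Na': "\<And>w. E a w \<longleftrightarrow> w \<in> {s, e, c}" and Nb': "\<And>w. E b w \<longleftrightarrow> w \<in> {s, e, c}"
      using Na Nb by (simp_all add: insert_commute)
    have swap_ab: "{s, b, a, c, e} = {s, a, b, c, e}" and swap_ce: "{s, a, b, e, c} = {s, a, b, c, e}"
      and swap_both: "{s, b, a, e, c} = {s, a, b, c, e}" by auto
    consider "{s, a, c} \<inter> P = {}" | "{s, b, c} \<inter> P = {}" | "{s, a, e} \<inter> P = {}" | "{s, b, e} \<inter> P = {}"
      using \<open>s \<notin> P\<close> \<open>a \<in> P \<longleftrightarrow> b \<notin> P\<close> \<open>c \<in> P \<longleftrightarrow> e \<notin> P\<close> by blast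
    then show ?thesis
    proof cases
      case 1
      show ?thesis by (rule subdivided_K4_tight[OF zf sym _ distinct Na Nb Nc Ne 1]) (use in_V in auto)
    next
      case 2
      show ?thesis using subdivided_K4_tight[OF zf sym _ _ Nb Na Nc' Ne' 2] in_V distinct swap_ab by auto
    next
      case 3
      show ?thesis using subdivided_K4_tight[OF zf sym _ _ Na' Nb' Ne Nc 3] in_V distinct swap_ce
        by (auto simp: insert_commute)
    next
      case 4
      show ?thesis using subdivided_K4_tight[OF zf sym _ _ Nb' Na' Ne' Nc' 4] in_V distinct swap_both
        by (auto simp: insert_commute)
    qed
  qed
  ultimately show "s \<notin> P \<and> (\<forall>(v, u) \<in> set xs. u = s \<longrightarrow> v \<notin> {s, a, b, c, e})" by blast
qed

definition subtree :: "nat \<Rightarrow> bool list \<Rightarrow> gv set" where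
  "subtree n p = {Tr (p @ s) | s. length (p @ s) \<le> 2*n - 2} \<union> {Kv (p @ s) k | s k. length (p @ s) = 2*n - 2}"

lemma subtree_subset_G_verts: "subtree n p \<subseteq> G_verts n"
  unfolding subtree_def G_verts_def by blast

lemma subtree_Nil: "subtree n [] = G_verts n"
  unfolding subtree_def G_verts_def by auto

lemma subtree_leaf:
  "length p = 2*n - 2 \<Longrightarrow> subtree n p = {Tr p, Kv p KA, Kv p KB, Kv p KC, Kv p KE}"
  unfolding subtree_def by (auto intro: exI[of _ "[]"]) (metis k4v.exhaust)

lemma mem_subtree_iff:
  "Tr q \<in> subtree n p \<longleftrightarrow> (\<exists>s. q = p @ s) \<and> length q \<le> 2*n - 2"
  "Kv q k \<in> subtree n p \<longleftrightarrow> (\<exists>s. q = p @ s) \<and> length q = 2*n - 2"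
  "Yv \<notin> subtree n p"
  unfolding subtree_def by auto

lemma subtree_unfold:
  assumes "length p < 2*n - 2"
  shows "subtree n p = insert (Tr p) (subtree n (p @ [True]) \<union> subtree n (p @ [False]))"
proof -
  have extends: "(\<exists>s. q = p @ s) \<longleftrightarrow> q = p \<or> (\<exists>s. q = (p @ [True]) @ s) \<or> (\<exists>s. q = (p @ [False]) @ s)"
    for q
    by (metis (full_types) append.assoc append_Cons append_Nil append_Nil2 neq_Nil_conv)
  show ?thesis
  proof (rule set_eqI)
    fix x show "x \<in> subtree n p \<longleftrightarrow> x \<in> insert (Tr p) (subtree n (p @ [True]) \<union> subtree n (p @ [False]))"
      using assms by (cases x) (auto simp: mem_subtree_iff extends)
  qed
qed

lemma subtree_disjoint:
  "Tr p \<notin> subtree n (p @ [b])"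
  "subtree n (p @ [True]) \<inter> subtree n (p @ [False]) = {}"
  unfolding subtree_def by auto

lemma Ghat_edge_leaving_subtree:
  "Ghat_edge n (Tr q) w \<Longrightarrow> length q \<le> 2*n - 2 \<Longrightarrow> q \<noteq> [] \<Longrightarrow> w \<notin> subtree n q \<Longrightarrow> w = Tr (butlast q)"
  unfolding Ghat_edge_def Ghat_edge0_def subtree_def by (auto intro: exI[of _ "[]"])

lemma Ghat_edge_within_subtree:
  "Ghat_edge n (Tr p) w \<Longrightarrow> length p < 2*n - 2 \<Longrightarrow> w \<in> subtree n p \<Longrightarrow> \<exists>b. w = Tr (p @ [b])"
  unfolding Ghat_edge_def Ghat_edge0_def subtree_def by auto

lemma Ghat_edge_gadget:
  assumes "length p = 2*n - 2"
  shows "Ghat_edge n (Kv p KA) w \<longleftrightarrow> w \<in> {Tr p, Kv p KC, Kv p KE}"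
    and "Ghat_edge n (Kv p KB) w \<longleftrightarrow> w \<in> {Tr p, Kv p KC, Kv p KE}"
    and "Ghat_edge n (Kv p KC) w \<longleftrightarrow> w \<in> {Kv p KA, Kv p KB, Kv p KE}"
    and "Ghat_edge n (Kv p KE) w \<longleftrightarrow> w \<in> {Kv p KA, Kv p KB, Kv p KC}"
  using assms unfolding Ghat_edge_def Ghat_edge0_def
  by (auto simp: doubleton_eq_iff; metis k4v.exhaust)+

locale Ghat_in_graph =
  fixes V :: "'a set" and E :: "'a \<Rightarrow> 'a \<Rightarrow> bool" and f :: "gv \<Rightarrow> 'a" and n :: nat
    and P :: "'a set"
  assumes simple: "simple_graph V E"
    and inj: "inj_on f (Ghat_verts n)"
    and image_in_V: "f ` Ghat_verts n \<subseteq> V"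
    and induced: "\<forall>u\<in>Ghat_verts n. \<forall>v\<in>Ghat_verts n. E (f u) (f v) \<longleftrightarrow> Ghat_edge n u v"
    and pendant: "\<forall>u\<in>G_verts n. \<forall>w\<in>V - f ` G_verts n. E (f u) w \<longrightarrow> u = root \<and> w = f Yv"
begin

lemma G_verts_subset: "G_verts n \<subseteq> Ghat_verts n"
  unfolding Ghat_verts_def by auto

lemma E_sym: "E u v \<longleftrightarrow> E v u"
  using simple unfolding simple_graph_def by blast

lemma E_in_V: "E u v \<Longrightarrow> u \<in> V \<and> v \<in> V"
  using simple unfolding simple_graph_def by blast

lemma finite_V: "finite V"
  using simple unfolding simple_graph_def by blast

lemma f_in_V: "x \<in> G_verts n \<Longrightarrow> f x \<in> V"
  using image_in_V G_verts_subset by blast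

lemma f_eq_iff: "x \<in> G_verts n \<Longrightarrow> y \<in> G_verts n \<Longrightarrow> f x = f y \<longleftrightarrow> x = y"
  using inj G_verts_subset by (meson inj_on_eq_iff subsetD)

lemma E_image_iff: "x \<in> G_verts n \<Longrightarrow> y \<in> G_verts n \<Longrightarrow> E (f x) (f y) \<longleftrightarrow> Ghat_edge n x y"
  using induced G_verts_subset by blast

lemma E_image_left_iff:
  assumes x: "x \<in> G_verts n"
  shows "E (f x) v \<longleftrightarrow> (\<exists>w\<in>Ghat_verts n. v = f w \<and> Ghat_edge n x w)"
proof
  assume e: "E (f x) v"
  show "\<exists>w\<in>Ghat_verts n. v = f w \<and> Ghat_edge n x w"
  proof (cases "v \<in> f ` G_verts n")
    case True
    then show ?thesis using induced x e G_verts_subset by blast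
  next
    case False
    then have "x = root \<and> v = f Yv" using pendant x E_in_V e by blast
    then show ?thesis unfolding Ghat_verts_def root_def Ghat_edge_def Ghat_edge0_def by auto
  qed
next
  assume "\<exists>w\<in>Ghat_verts n. v = f w \<and> Ghat_edge n x w"
  then show "E (f x) v" using induced x G_verts_subset by blast
qed

definition black :: "bool list \<Rightarrow> nat" where
  "black p = card (f ` subtree n p \<inter> P)"

definition root_forced_externally :: "('a \<times> 'a) list \<Rightarrow> bool list \<Rightarrow> bool" where
  "root_forced_externally xs p \<longleftrightarrow>
     f (Tr p) \<notin> P \<and> (\<forall>(v, u)\<in>set xs. u = f (Tr p) \<longrightarrow> v \<notin> f ` subtree n p)"

lemma card_image_Un_Int:
  assumes "A \<inter> B = {}" and "A \<union> B \<subseteq> G_verts n"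
  shows "card (f ` (A \<union> B) \<inter> P) = card (f ` A \<inter> P) + card (f ` B \<inter> P)"
proof -
  have "f ` (A \<union> B) \<inter> P = (f ` A \<inter> P) \<union> (f ` B \<inter> P)" by auto
  moreover have "finite (f ` A \<inter> P)" "finite (f ` B \<inter> P)"
    using assms(2) f_in_V finite_V by (auto intro: finite_subset)
  moreover have "(f ` A \<inter> P) \<inter> (f ` B \<inter> P) = {}"
    using assms f_eq_iff by blast
  ultimately show ?thesis by (simp add: card_Un_disjoint)
qed

lemma black_unfold:
  assumes "length p < 2*n - 2"
  shows "black p = of_bool (f (Tr p) \<in> P) + black (p @ [True]) + black (p @ [False])"
proof -
  have "Tr p \<in> G_verts n" using assms unfolding G_verts_def by auto
  then have "card (f ` ({Tr p} \<union> (subtree n (p @ [True]) \<union> subtree n (p @ [False]))) \<inter> P)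
      = card (f ` {Tr p} \<inter> P) + card (f ` (subtree n (p @ [True]) \<union> subtree n (p @ [False])) \<inter> P)"
    using subtree_disjoint(1) subtree_subset_G_verts by (intro card_image_Un_Int) auto
  also have "\<dots> = of_bool (f (Tr p) \<in> P) + black (p @ [True]) + black (p @ [False])"
    unfolding black_def using subtree_disjoint(2) subtree_subset_G_verts
    by (subst card_image_Un_Int) auto
  finally show ?thesis
    unfolding black_def subtree_unfold[OF assms] by simp
qed

lemma root_forced_by_parent:
  assumes zf: "zf_process V E P xs" and "p \<noteq> []" and "length p \<le> 2*n - 2"
    and "root_forced_externally xs p"
  shows "(f (Tr (butlast p)), f (Tr p)) \<in> set xs"
proof -
  have valid: "valid_forcing_seq V E P xs" using zf unfolding zf_process_def by blast
  have p: "Tr p \<in> G_verts n" using assms(3) unfolding G_verts_def by auto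
  obtain v where v: "(v, f (Tr p)) \<in> set xs"
    using zf_process_forces_white[OF zf f_in_V[OF p]] assms(4)
    unfolding root_forced_externally_def by blast
  then have "E (f (Tr p)) v" using valid_forcing_seqD[OF valid] E_sym by blast
  then obtain w where w: "w \<in> Ghat_verts n" "v = f w" "Ghat_edge n (Tr p) w"
    using E_image_left_iff[OF p] by blast
  have "w \<notin> subtree n p" using assms(4) v w(2) unfolding root_forced_externally_def by blast
  then show ?thesis using Ghat_edge_leaving_subtree[OF w(3) assms(3,2)] v w(2) by simp
qed

lemma leaf_bound:
  assumes zf: "zf_process V E P xs" and leaf: "length p = 2*n - 2"
  shows "2 \<le> black p \<and> (black p = 2 \<longrightarrow> root_forced_externally xs p)"
proof -
  let ?s = "f (Tr p)" and ?a = "f (Kv p KA)" and ?b = "f (Kv p KB)"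
    and ?c = "f (Kv p KC)" and ?e = "f (Kv p KE)"
  have in_G: "Tr p \<in> G_verts n" "\<And>k. Kv p k \<in> G_verts n"
    using leaf unfolding G_verts_def by auto
  have in_Ghat: "Tr p \<in> Ghat_verts n" "\<And>k. Kv p k \<in> Ghat_verts n"
    using in_G G_verts_subset by auto
  have gadget: "f ` subtree n p = {?s, ?a, ?b, ?c, ?e}"
    by (simp add: subtree_leaf[OF leaf])
  have "distinct [?s, ?a, ?b, ?c, ?e]"
    using f_eq_iff in_G by auto
  moreover have "{?s, ?a, ?b, ?c, ?e} \<subseteq> V"
    using f_in_V in_G by auto
  moreover have "E ?a w \<longleftrightarrow> w \<in> {?s, ?c, ?e}" "E ?b w \<longleftrightarrow> w \<in> {?s, ?c, ?e}"
    "E ?c w \<longleftrightarrow> w \<in> {?a, ?b, ?e}" "E ?e w \<longleftrightarrow> w \<in> {?a, ?b, ?c}" for w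
    unfolding E_image_left_iff[OF in_G(2)] Ghat_edge_gadget[OF leaf] using in_Ghat by auto
  ultimately show ?thesis
    using subdivided_K4_zero_forcing[OF zf E_sym] gadget
    unfolding black_def root_forced_externally_def by metis
qed

lemma odd_level_bound:
  assumes zf: "zf_process V E P xs" and inner: "length q < 2*n - 2"
    and children: "\<And>b. m \<le> black (q @ [b]) \<and> (black (q @ [b]) = m \<longrightarrow> root_forced_externally xs (q @ [b]))"
  shows "2*m + 1 \<le> black q \<and> (black q = 2*m + 1 \<longrightarrow> (\<exists>b. (f (Tr q), f (Tr (q @ [b]))) \<in> set xs))"
proof -
  have valid: "valid_forcing_seq V E P xs" using zf unfolding zf_process_def by blast
  have forced_by_q: "(f (Tr q), f (Tr (q @ [b]))) \<in> set xs" if "black (q @ [b]) = m" for b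
    using root_forced_by_parent[OF zf, of "q @ [b]"] children[of b] that inner by simp
  have not_both: "\<not> (black (q @ [True]) = m \<and> black (q @ [False]) = m)"
  proof
    assume "black (q @ [True]) = m \<and> black (q @ [False]) = m"
    then have "f (Tr (q @ [True])) = f (Tr (q @ [False]))"
      using forced_by_q valid_forcing_seq_unique_target[OF valid] by blast
    moreover have "Tr (q @ [b]) \<in> G_verts n" for b using inner unfolding G_verts_def by auto
    ultimately show False using f_eq_iff by blast
  qed
  have lower: "m \<le> black (q @ [True])" "m \<le> black (q @ [False])"
    using children by blast+
  then have sum: "2*m + 1 \<le> black (q @ [True]) + black (q @ [False])"
    using not_both by arith
  show ?thesis
  proof (intro conjI impI)
    show "2*m + 1 \<le> black q" using black_unfold[OF inner] sum by simp
  next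
    assume "black q = 2*m + 1"
    then have "black (q @ [True]) = m \<or> black (q @ [False]) = m"
      using black_unfold[OF inner] lower sum by arith
    then show "\<exists>b. (f (Tr q), f (Tr (q @ [b]))) \<in> set xs" using forced_by_q by blast
  qed
qed

lemma even_level_bound:
  assumes zf: "zf_process V E P xs" and deep: "length p + 2 \<le> 2*n - 2"
    and children: "\<And>b. 2*m + 1 \<le> black (p @ [b]) \<and>
      (black (p @ [b]) = 2*m + 1 \<longrightarrow> (\<exists>b'. (f (Tr (p @ [b])), f (Tr (p @ [b, b']))) \<in> set xs))"
  shows "4*m + 2 \<le> black p \<and> (black p = 4*m + 2 \<longrightarrow> root_forced_externally xs p)"
proof -
  have valid: "valid_forcing_seq V E P xs" using zf unfolding zf_process_def by blast
  have inner: "length p < 2*n - 2" using deep by simp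
  have lower: "2*m + 1 \<le> black (p @ [True])" "2*m + 1 \<le> black (p @ [False])"
    using children by blast+
  show ?thesis
  proof (intro conjI impI)
    show "4*m + 2 \<le> black p" using black_unfold[OF inner] lower by simp
  next
    assume "black p = 4*m + 2"
    then have white: "f (Tr p) \<notin> P"
      and "black (p @ [True]) = 2*m + 1" "black (p @ [False]) = 2*m + 1"
      using black_unfold[OF inner] lower by auto
    then have busy: "\<exists>b'. (f (Tr (p @ [b])), f (Tr (p @ [b, b']))) \<in> set xs" for b
      using children by (cases b) auto
    have in_G: "Tr p \<in> G_verts n" "Tr (p @ [b, b']) \<in> G_verts n" for b b'
      using deep unfolding G_verts_def by auto
    have "v \<notin> f ` subtree n p" if forces_root: "(v, f (Tr p)) \<in> set xs" for v
    proof
      assume "v \<in> f ` subtree n p"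
      then obtain w where w: "w \<in> subtree n p" "v = f w" by blast
      have "E v (f (Tr p))" using valid_forcing_seqD[OF valid forces_root] by blast
      then have "Ghat_edge n (Tr p) w"
        using E_image_iff in_G(1) w subtree_subset_G_verts E_sym by blast
      then obtain b where "w = Tr (p @ [b])" using Ghat_edge_within_subtree inner w(1) by blast
      moreover obtain b' where "(f (Tr (p @ [b])), f (Tr (p @ [b, b']))) \<in> set xs" using busy by blast
      ultimately have "f (Tr p) = f (Tr (p @ [b, b']))"
        using forces_root w(2) valid_forcing_seq_unique_target[OF valid] by blast
      then show False using f_eq_iff in_G by simp
    qed
    then show "root_forced_externally xs p" unfolding root_forced_externally_def using white by blast
  qed
qed

lemma subtree_bound:
  assumes "1 \<le> k" and "length p + 2*k = 2*n" and zf: "zf_process V E P xs"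
  shows "t k \<le> black p \<and> (black p = t k \<longrightarrow> root_forced_externally xs p)"
  using assms(1,2)
proof (induction k arbitrary: p rule: nat_induct_at_least)
  case base
  then show ?case using leaf_bound[OF zf] by simp
next
  case (Suc k)
  have "t (Suc k) = 4 * t k + 2" using Suc.hyps by (cases k) auto
  moreover have "2 * t k + 1 \<le> black (p @ [b]) \<and>
      (black (p @ [b]) = 2 * t k + 1 \<longrightarrow> (\<exists>b'. (f (Tr (p @ [b])), f (Tr (p @ [b, b']))) \<in> set xs))" for b
    using odd_level_bound[OF zf, of "p @ [b]" "t k"] Suc.IH[of "p @ [b, _]"] Suc.prems Suc.hyps by simp
  ultimately show ?case
    using even_level_bound[OF zf, of p "t k"] Suc.prems Suc.hyps by simp
qed

end

theorem lemma1:
  fixes V :: "'a set" and E :: "'a \<Rightarrow> 'a \<Rightarrow> bool" and f :: "gv \<Rightarrow> 'a" and n :: nat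
  assumes "n \<ge> 1"
    and "simple_graph V E"
    and "inj_on f (Ghat_verts n)"
    and "f ` Ghat_verts n \<subseteq> V"
    and "\<forall>u\<in>Ghat_verts n. \<forall>v\<in>Ghat_verts n. E (f u) (f v) \<longleftrightarrow> Ghat_edge n u v"
    and "\<forall>u\<in>G_verts n. \<forall>w\<in>V - f ` G_verts n. E (f u) w \<longrightarrow> u = root \<and> w = f Yv"
    and "zero_forcing_set V E P"
  shows "t n \<le> card (f ` G_verts n \<inter> P)
    \<and> (card (f ` G_verts n \<inter> P) = t n \<longrightarrow>
         f root \<notin> P \<and>
         (\<forall>xs. zf_process V E P xs \<longrightarrow>
            (\<forall>(v, u) \<in> set xs. u = f root \<longrightarrow> v \<notin> f ` G_verts n)))"
  
proof -
  interpret Ghat_in_graph V E f n P using assms(2-6) by unfold_locales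
  have bound: "t n \<le> black [] \<and> (black [] = t n \<longrightarrow> root_forced_externally xs [])"
    if "zf_process V E P xs" for xs
    using subtree_bound[OF assms(1) _ that] by simp
  obtain xs0 where "zf_process V E P xs0"
    using assms(7) unfolding zero_forcing_set_def by blast
  then show ?thesis
    using bound unfolding black_def root_forced_externally_def subtree_Nil root_def by blast
qed

end
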